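(* Let $\alpha\in(0,1]$, $0\le a<b$, and let $f:[a,b]\to\mathbb{R}$ be $\alpha$-fractional differentiable with $D_\alpha f$ continuous and $m\le D_\alpha f(t)\le M$ for $t\in[a,b]$. Then $$ \left|\frac{f(b)+f(a)}{2}-\frac{\alpha}{b^\alpha-a^\alpha}\int_a^b f(s)\,d_\alpha s\right|\le\frac14\left(\frac{b^\alpha-a^\alpha}{\alpha}\right)(M-m). $$
   Context: The conformable $\alpha$-fractional derivative is $D_\alpha f(t):=\lim_{\varepsilon\to 0}\frac{f(t+\varepsilon t^{1-\alpha})-f(t)}{\varepsilon}$ for $t>0$, $D_\alpha f(0):=\lim_{t\to0^+}D_\alpha f(t)$. Integrals: $\int_a^b h(s)\,d_\alpha s:=\int_a^b h(s)s^{\alpha-1}\,ds$.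
   Formalization: f is also assumed continuous on [a,b], so in the case a = 0 also at the point 0. The statement above fails without it. *)

theory Defs
  imports "HOL-Analysis.Analysis"
begin

definition conf_has_deriv :: "real \<Rightarrow> (real \<Rightarrow> real) \<Rightarrow> real \<Rightarrow> real set \<Rightarrow> real \<Rightarrow> bool" where
  "conf_has_deriv \<alpha> f L S t \<longleftrightarrow>
     ((\<lambda>e. (f (t + e * t powr (1 - \<alpha>)) - f t) / e) \<longlongrightarrow> L)
       (at 0 within {e. t + e * t powr (1 - \<alpha>) \<in> S})"

definition conf_integral :: "real \<Rightarrow> real \<Rightarrow> real \<Rightarrow> (real \<Rightarrow> real) \<Rightarrow> real" where
  "conf_integral \<alpha> a b h = integral {a..b} (\<lambda>s. h s * s powr (\<alpha> - 1))"

end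

theory Submission imports Defs begin

text \<open>With \<open>\<phi> s = s\<^sup>\<alpha> / \<alpha>\<close> we have \<open>\<phi>' s = s\<^sup>\<alpha>\<^sup>-\<^sup>1\<close>, the conformable derivative
  of \<open>f\<close> at \<open>t > 0\<close> is \<open>f'(t) / \<phi>'(t)\<close>, and \<open>d\<^sub>\<alpha>s = \<phi>'(s) ds\<close>. So the inequality is
  the classical trapezoid bound taken with respect to \<open>\<phi>\<close>. Writing \<open>\<mu>\<close> for the midpoint of
  \<open>\<phi>(a), \<phi>(b)\<close> and \<open>c = (M + m) / 2\<close>, the primitive
  \<open>(\<phi> - \<mu>) f - c (\<phi> - \<mu>)\<^sup>2 / 2\<close> turns the trapezoid error into
  \<open>\<integral> (\<phi> - \<mu>) (D\<^sub>\<alpha> f - c) \<phi>'\<close>, whose integrand is bounded by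
  \<open>(\<phi>(b) - \<phi>(a)) / 2 \<cdot> (M - m) / 2 \<cdot> \<phi>'\<close>.\<close>

lemma conf_has_deriv_imp_has_real_derivative:
  fixes \<alpha> a b t L :: real and f :: "real \<Rightarrow> real"
  assumes "0 \<le> a" "a < t" "t < b" "conf_has_deriv \<alpha> f L {a..b} t"
  shows "(f has_real_derivative L * t powr (\<alpha> - 1)) (at t)"
proof -
  define c where "c = t powr (1 - \<alpha>)"
  have c: "c > 0" using assms unfolding c_def by simp
  have domain: "{e. t + e * c \<in> {a..b}} = {(a-t)/c..(b-t)/c}"
    using c by (auto simp: field_simps)
  have "0 \<in> interior {(a-t)/c..(b-t)/c}"
    using c assms by (auto simp: field_simps)
  then have "at 0 within {e. t + e * c \<in> {a..b}} = at 0"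
    unfolding domain by (rule at_within_interior)
  then have lim: "((\<lambda>e. (f (t + e * c) - f t) / e) \<longlongrightarrow> L) (at 0)"
    using assms(4) unfolding conf_has_deriv_def c_def[symmetric] by simp
  have "((\<lambda>h. h / c) \<longlongrightarrow> 0 / c) (at 0)"
    by (intro tendsto_intros) (use c in auto)
  then have "filterlim (\<lambda>h. h / c) (at 0) (at 0)"
    using c by (auto simp: filterlim_at eventually_at_filter)
  from filterlim_compose[OF lim this]
  have "((\<lambda>h. (f (t + h) - f t) / (h / c)) \<longlongrightarrow> L) (at 0)"
    using c by simp
  then have "((\<lambda>h. (f (t + h) - f t) / (h / c) / c) \<longlongrightarrow> L / c) (at 0)"
    by (rule tendsto_divide) (use c in auto)
  moreover have "(\<lambda>h. (f (t + h) - f t) / (h / c) / c) = (\<lambda>h. (f (t + h) - f t) / h)"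
    using c by (simp add: fun_eq_iff)
  moreover have "L / c = L * t powr (\<alpha> - 1)"
    using assms c unfolding c_def by (simp add: powr_diff powr_minus divide_simps)
  ultimately show ?thesis by (simp add: DERIV_def)
qed

lemma integrable_on_Icc_if_dominated_on_open:
  fixes h w :: "real \<Rightarrow> real"
  assumes "continuous_on {a<..<b} h" "w integrable_on {a..b}"
    and "\<And>x. x \<in> {a<..<b} \<Longrightarrow> \<bar>h x\<bar> \<le> w x"
  shows "h integrable_on {a..b}"
proof -
  have "h \<in> borel_measurable (lebesgue_on {a<..<b})"
    using assms(1) by (rule continuous_imp_measurable_on_sets_lebesgue) simp
  moreover have "w integrable_on {a<..<b}"
    using assms(2) by (simp add: integrable_on_open_interval_real)
  ultimately have "h integrable_on {a<..<b}"
    using assms(3) by (rule measurable_bounded_by_integrable_imp_integrable_real) simp_all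
  then show ?thesis by (simp add: integrable_on_open_interval_real)
qed

lemma has_real_derivative_nonneg_between_endpoints:
  fixes \<phi> d :: "real \<Rightarrow> real"
  assumes "continuous_on {a..b} \<phi>"
    and "\<And>x. x \<in> {a<..<b} \<Longrightarrow> (\<phi> has_real_derivative d x) (at x)"
    and "\<And>x. x \<in> {a<..<b} \<Longrightarrow> 0 \<le> d x"
    and s: "s \<in> {a..b}"
  shows "\<phi> a \<le> \<phi> s \<and> \<phi> s \<le> \<phi> b"
proof
  show "\<phi> a \<le> \<phi> s"
  proof (rule DERIV_nonneg_imp_increasing_open[of a s \<phi>])
    show "continuous_on {a..s} \<phi>"
      using assms(1) by (rule continuous_on_subset) (use s in auto)
  qed (use assms in force)+
  show "\<phi> s \<le> \<phi> b"
  proof (rule DERIV_nonneg_imp_increasing_open[of s b \<phi>])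
    show "continuous_on {s..b} \<phi>"
      using assms(1) by (rule continuous_on_subset) (use s in auto)
  qed (use assms in force)+
qed

lemma trapezoid_integral_identity:
  fixes a b c :: real and f g \<phi> d :: "real \<Rightarrow> real"
  defines "\<mu> \<equiv> (\<phi> a + \<phi> b) / 2"
  assumes "a \<le> b"
    and "continuous_on {a..b} \<phi>" "\<And>x. x \<in> {a<..<b} \<Longrightarrow> (\<phi> has_real_derivative d x) (at x)"
    and "continuous_on {a..b} f" "\<And>x. x \<in> {a<..<b} \<Longrightarrow> (f has_real_derivative g x * d x) (at x)"
    and "(\<lambda>s. (\<phi> s - \<mu>) * (g s - c) * d s) integrable_on {a..b}"
  shows "((\<lambda>s. f s * d s) has_integral
           (f b + f a) / 2 * (\<phi> b - \<phi> a) - integral {a..b} (\<lambda>s. (\<phi> s - \<mu>) * (g s - c) * d s))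
         {a..b}"
proof -
  define G where "G s = (\<phi> s - \<mu>) * f s - c * (\<phi> s - \<mu>)\<^sup>2 / 2" for s
  have "((\<lambda>s. f s * d s + (\<phi> s - \<mu>) * (g s - c) * d s) has_integral G b - G a) {a..b}"
  proof (rule fundamental_theorem_of_calculus_interior)
    show "continuous_on {a..b} G"
      unfolding G_def using assms by (intro continuous_intros) auto
    fix x assume x: "x \<in> {a<..<b}"
    have "(G has_real_derivative f x * d x + (\<phi> x - \<mu>) * (g x - c) * d x) (at x)"
      unfolding G_def using assms(4,6)[OF x]
      by (auto intro!: derivative_eq_intros simp: field_simps)
    then show "(G has_vector_derivative f x * d x + (\<phi> x - \<mu>) * (g x - c) * d x) (at x)"
      by (simp add: has_real_derivative_iff_has_vector_derivative)
  qed (use assms in auto)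
  moreover have "G b - G a = (f b + f a) / 2 * (\<phi> b - \<phi> a)"
    unfolding G_def \<mu>_def by (simp add: field_simps power2_eq_square)
  ultimately show ?thesis
    using has_integral_diff[OF _ integrable_integral[OF assms(7)]] by fastforce
qed

lemma trapezoid_inequality_weighted:
  fixes a b m M :: real and f g \<phi> d :: "real \<Rightarrow> real"
  assumes "a \<le> b"
    and \<phi>_cont: "continuous_on {a..b} \<phi>"
    and \<phi>_deriv: "\<And>x. x \<in> {a<..<b} \<Longrightarrow> (\<phi> has_real_derivative d x) (at x)"
    and d_cont: "continuous_on {a<..<b} d" and d_nonneg: "\<And>x. x \<in> {a..b} \<Longrightarrow> 0 \<le> d x"
    and "continuous_on {a..b} f" "\<And>x. x \<in> {a<..<b} \<Longrightarrow> (f has_real_derivative g x * d x) (at x)"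
    and g_cont: "continuous_on {a<..<b} g" and g_bounds: "\<And>x. x \<in> {a..b} \<Longrightarrow> m \<le> g x \<and> g x \<le> M"
  shows "\<bar>(f b + f a) / 2 * (\<phi> b - \<phi> a) - integral {a..b} (\<lambda>s. f s * d s)\<bar>
           \<le> (\<phi> b - \<phi> a)\<^sup>2 * (M - m) / 4"
proof -
  define \<mu> where "\<mu> = (\<phi> a + \<phi> b) / 2"
  define c where "c = (M + m) / 2"
  define C where "C = (\<phi> b - \<phi> a) * (M - m) / 4"
  define K where "K s = (\<phi> s - \<mu>) * (g s - c) * d s" for s
  have \<phi>_between: "\<phi> a \<le> \<phi> s \<and> \<phi> s \<le> \<phi> b" if "s \<in> {a..b}" for s
    using has_real_derivative_nonneg_between_endpoints[OF \<phi>_cont \<phi>_deriv] d_nonneg that by auto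
  have d_integral: "(d has_integral \<phi> b - \<phi> a) {a..b}"
    using assms by (intro fundamental_theorem_of_calculus_interior)
      (auto simp flip: has_real_derivative_iff_has_vector_derivative)
  then have Cd_integral: "((\<lambda>s. C * d s) has_integral C * (\<phi> b - \<phi> a)) {a..b}"
    by (rule has_integral_mult_right)
  have K_bound: "\<bar>K s\<bar> \<le> C * d s" if "s \<in> {a..b}" for s
  proof -
    have "\<bar>\<phi> s - \<mu>\<bar> \<le> (\<phi> b - \<phi> a) / 2" "\<bar>g s - c\<bar> \<le> (M - m) / 2"
      using \<phi>_between[OF that] g_bounds[OF that] unfolding \<mu>_def c_def abs_le_iff by (auto simp: field_simps)
    then have "\<bar>\<phi> s - \<mu>\<bar> * \<bar>g s - c\<bar> * d s \<le> (\<phi> b - \<phi> a) / 2 * ((M - m) / 2) * d s"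
      using d_nonneg[OF that] \<phi>_between[OF that] by (intro mult_right_mono mult_mono) auto
    then show ?thesis
      unfolding K_def C_def using d_nonneg[OF that] by (simp add: abs_mult)
  qed
  have "K integrable_on {a..b}"
  proof (rule integrable_on_Icc_if_dominated_on_open[where w = "\<lambda>s. C * d s"])
    show "continuous_on {a<..<b} K"
    proof -
      have "continuous_on {a<..<b} \<phi>"
        by (rule continuous_on_subset[OF \<phi>_cont]) auto
      then show ?thesis
        unfolding K_def using d_cont g_cont by (intro continuous_intros)
    qed
  qed (use Cd_integral K_bound in auto)
  with assms have "((\<lambda>s. f s * d s) has_integral
      (f b + f a) / 2 * (\<phi> b - \<phi> a) - integral {a..b} K) {a..b}"
    unfolding K_def \<mu>_def by (intro trapezoid_integral_identity) auto
  then have "\<bar>(f b + f a) / 2 * (\<phi> b - \<phi> a) - integral {a..b} (\<lambda>s. f s * d s)\<bar>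
      = \<bar>integral {a..b} K\<bar>"
    by (simp add: integral_unique)
  also have "\<dots> \<le> C * (\<phi> b - \<phi> a)"
    using integral_norm_bound_integral[OF \<open>K integrable_on {a..b}\<close>
        has_integral_integrable[OF Cd_integral]] K_bound integral_unique[OF d_integral]
    by simp
  also have "\<dots> = (\<phi> b - \<phi> a)\<^sup>2 * (M - m) / 4"
    unfolding C_def by (simp add: power2_eq_square)
  finally show ?thesis .
qed

theorem mainTheorem19:
  fixes \<alpha> a b m M :: real and f Df :: "real \<Rightarrow> real"
  assumes "0 < \<alpha>" "\<alpha> \<le> 1" "0 \<le> a" "a < b"
    and "continuous_on {a..b} f"
    and "\<And>t. t \<in> {a..b} \<Longrightarrow> 0 < t \<Longrightarrow> conf_has_deriv \<alpha> f (Df t) {a..b} t"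
    and "continuous_on {a..b} Df"
    and "\<And>t. t \<in> {a..b} \<Longrightarrow> m \<le> Df t \<and> Df t \<le> M"
  shows "\<bar>(f b + f a) / 2 - \<alpha> / (b powr \<alpha> - a powr \<alpha>) * conf_integral \<alpha> a b f\<bar>
           \<le> 1 / 4 * ((b powr \<alpha> - a powr \<alpha>) / \<alpha>) * (M - m)"
proof -
  define \<phi> where "\<phi> s = s powr \<alpha> / \<alpha>" for s
  have \<phi>_deriv: "(\<phi> has_real_derivative x powr (\<alpha> - 1)) (at x)" if "x \<in> {a<..<b}" for x
    using DERIV_cdivide[OF has_real_derivative_powr, of x \<alpha> \<alpha>] that assms
    unfolding \<phi>_def by auto
  have f_deriv: "(f has_real_derivative Df x * x powr (\<alpha> - 1)) (at x)" if "x \<in> {a<..<b}" for x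
    using that assms by (intro conf_has_deriv_imp_has_real_derivative assms(6)) auto
  have "\<bar>(f b + f a) / 2 * (\<phi> b - \<phi> a) - conf_integral \<alpha> a b f\<bar> \<le> (\<phi> b - \<phi> a)\<^sup>2 * (M - m) / 4"
    unfolding conf_integral_def
  proof (rule trapezoid_inequality_weighted[OF _ _ \<phi>_deriv _ _ assms(5) f_deriv])
    show "continuous_on {a..b} \<phi>"
      unfolding \<phi>_def using assms by (intro continuous_intros continuous_on_powr') auto
    show "continuous_on {a<..<b} (\<lambda>s. s powr (\<alpha> - 1))"
      using assms by (intro continuous_intros) auto
    show "continuous_on {a<..<b} Df"
      by (rule continuous_on_subset[OF assms(7)]) auto
  qed (use assms in auto)
  moreover have "\<phi> b - \<phi> a = (b powr \<alpha> - a powr \<alpha>) / \<alpha>"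
    unfolding \<phi>_def by (simp add: diff_divide_distrib)
  moreover have "a powr \<alpha> < b powr \<alpha>"
    using assms by (simp add: powr_less_mono2)
  ultimately show ?thesis
    using assms by (simp add: field_simps abs_divide power2_eq_square)
qed

end
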